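(* Let $\Phi$ be an irreducible root system (e.g. that of a simple complex Lie algebra) with Weyl group $W$, highest root $\theta$, and positive roots determined by a Borel subalgebra. If $\alpha\in\Phi$ is a root of the same length as $\theta$, then there is a unique maximal element $w\in W$ in the Bruhat order among those satisfying $w^{-1}\theta=\alpha$.
   Context: The Bruhat order on $W$ is with respect to the simple reflections determined by the choice of positive roots. *)

theory Defs
  imports "HOL-Analysis.Analysis"
begin

definition refl :: "'a::euclidean_space \<Rightarrow> 'a \<Rightarrow> 'a" where
  "refl \<alpha> v = v - ((2 * (v \<bullet> \<alpha>)) / (\<alpha> \<bullet> \<alpha>)) *\<^sub>R \<alpha>"

definition root_system :: "'a::euclidean_space set \<Rightarrow> bool" where
  "root_system \<Phi> \<longleftrightarrow>
     finite \<Phi> \<and> 0 \<notin> \<Phi> \<and> span \<Phi> = UNIV \<and>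
     (\<forall>\<alpha>\<in>\<Phi>. refl \<alpha> ` \<Phi> = \<Phi>) \<and>
     (\<forall>\<alpha>\<in>\<Phi>. \<forall>\<beta>\<in>\<Phi>. 2 * (\<beta> \<bullet> \<alpha>) / (\<alpha> \<bullet> \<alpha>) \<in> \<int>) \<and>
     (\<forall>\<alpha>\<in>\<Phi>. \<forall>c::real. c *\<^sub>R \<alpha> \<in> \<Phi> \<longrightarrow> c = 1 \<or> c = -1)"

definition irreducible_rs :: "'a::euclidean_space set \<Rightarrow> bool" where
  "irreducible_rs \<Phi> \<longleftrightarrow> \<Phi> \<noteq> {} \<and>
     \<not> (\<exists>A B. A \<union> B = \<Phi> \<and> A \<noteq> {} \<and> B \<noteq> {} \<and> (\<forall>a\<in>A. \<forall>b\<in>B. a \<bullet> b = 0))"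

text \<open>A choice of positive roots is given by a regular vector c (equivalently a Borel subalgebra).\<close>
definition regular_vec :: "'a::euclidean_space set \<Rightarrow> 'a \<Rightarrow> bool" where
  "regular_vec \<Phi> c \<longleftrightarrow> (\<forall>\<alpha>\<in>\<Phi>. c \<bullet> \<alpha> \<noteq> 0)"

definition pos_roots :: "'a::euclidean_space set \<Rightarrow> 'a \<Rightarrow> 'a set" where
  "pos_roots \<Phi> c = {\<alpha>\<in>\<Phi>. c \<bullet> \<alpha> > 0}"

definition simple_roots :: "'a::euclidean_space set \<Rightarrow> 'a \<Rightarrow> 'a set" where
  "simple_roots \<Phi> c = {\<alpha>\<in>pos_roots \<Phi> c.
      \<not> (\<exists>\<beta>\<in>pos_roots \<Phi> c. \<exists>\<gamma>\<in>pos_roots \<Phi> c. \<alpha> = \<beta> + \<gamma>)}"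

definition nonneg_comb :: "'a::euclidean_space set \<Rightarrow> 'a \<Rightarrow> bool" where
  "nonneg_comb S v \<longleftrightarrow> (\<exists>f. (\<forall>s\<in>S. f s \<ge> 0) \<and> v = (\<Sum>s\<in>S. f s *\<^sub>R s))"

definition highest_root :: "'a::euclidean_space set \<Rightarrow> 'a \<Rightarrow> 'a \<Rightarrow> bool" where
  "highest_root \<Phi> c \<theta> \<longleftrightarrow> \<theta> \<in> \<Phi> \<and>
     (\<forall>\<beta>\<in>\<Phi>. nonneg_comb (simple_roots \<Phi> c) (\<theta> - \<beta>))"

inductive_set weyl_group :: "'a::euclidean_space set \<Rightarrow> ('a \<Rightarrow> 'a) set" for \<Phi> where
  weyl_id: "id \<in> weyl_group \<Phi>"
| weyl_step: "w \<in> weyl_group \<Phi> \<Longrightarrow> \<alpha> \<in> \<Phi> \<Longrightarrow> refl \<alpha> \<circ> w \<in> weyl_group \<Phi>"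

definition word_prod :: "'a::euclidean_space list \<Rightarrow> 'a \<Rightarrow> 'a" where
  "word_prod ss = foldr (\<lambda>a f. refl a \<circ> f) ss id"

definition weyl_length :: "'a::euclidean_space set \<Rightarrow> 'a \<Rightarrow> ('a \<Rightarrow> 'a) \<Rightarrow> nat" where
  "weyl_length \<Phi> c w = (LEAST n. \<exists>ss. length ss = n \<and> set ss \<subseteq> simple_roots \<Phi> c \<and> w = word_prod ss)"

definition coxeter_reflections :: "'a::euclidean_space set \<Rightarrow> 'a \<Rightarrow> ('a \<Rightarrow> 'a) set" where
  "coxeter_reflections \<Phi> c =
     {w \<circ> refl s \<circ> inv w | w s. w \<in> weyl_group \<Phi> \<and> s \<in> simple_roots \<Phi> c}"

definition bruhat_step :: "'a::euclidean_space set \<Rightarrow> 'a \<Rightarrow> ('a \<Rightarrow> 'a) \<Rightarrow> ('a \<Rightarrow> 'a) \<Rightarrow> bool" where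
  "bruhat_step \<Phi> c u v \<longleftrightarrow> u \<in> weyl_group \<Phi> \<and>
     (\<exists>t\<in>coxeter_reflections \<Phi> c. v = u \<circ> t \<and> weyl_length \<Phi> c u < weyl_length \<Phi> c v)"

definition bruhat_le :: "'a::euclidean_space set \<Rightarrow> 'a \<Rightarrow> ('a \<Rightarrow> 'a) \<Rightarrow> ('a \<Rightarrow> 'a) \<Rightarrow> bool" where
  "bruhat_le \<Phi> c = (bruhat_step \<Phi> c)\<^sup>*\<^sup>*"

end

theory Submission
  imports Defs
begin

(* The set S of w in W with w alpha = theta is finite, and it is nonempty because
   alpha is W-conjugate to a dominant root of the same length, which can only be theta.
   So S has Bruhat-maximal elements, e.g. those of maximal length.  If w is maximal in S
   and gamma > 0 is a root orthogonal to theta, then w^-1 gamma < 0: otherwise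
   s_gamma w = w s_(w^-1 gamma) lies in S and is a longer element above w.  Hence a
   maximal w maps the negative roots orthogonal to alpha onto the positive roots
   orthogonal to theta.  For two maximal w1, w2 the element y = w1 w2^-1 therefore fixes
   theta and sends the simple roots orthogonal to theta to positive roots; since theta is
   dominant, y sends the remaining simple roots to positive roots as well, so y = 1. *)

lemma linear_refl: "linear (refl a)"
proof (rule linearI)
  fix x y :: 'a
  show "refl a (x + y) = refl a x + refl a y"
    unfolding refl_def by (simp add: inner_add_left add_divide_distrib distrib_left scaleR_add_left)
next
  fix r :: real and x :: 'a
  show "refl a (r *\<^sub>R x) = r *\<^sub>R refl a x"
    unfolding refl_def by (simp add: scaleR_diff_right)
qed

lemma inner_refl_right: "c \<bullet> refl a v = c \<bullet> v - (2 * (v \<bullet> a) / (a \<bullet> a)) * (c \<bullet> a)"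
  by (simp add: refl_def inner_diff_right)

lemma refl_self: "a \<noteq> 0 \<Longrightarrow> refl a a = - a"
  by (simp add: refl_def scaleR_2)

lemma refl_orthogonal: "v \<bullet> a = 0 \<Longrightarrow> refl a v = v"
  by (simp add: refl_def)

lemma refl_refl: assumes "a \<noteq> 0" shows "refl a (refl a v) = v"
proof -
  have "refl a v \<bullet> a = - (v \<bullet> a)"
    using assms by (simp add: refl_def inner_diff_left)
  then show ?thesis by (simp add: refl_def[of a "refl a v"]) (simp add: refl_def)
qed

lemma refl_comp_refl: "a \<noteq> 0 \<Longrightarrow> refl a \<circ> refl a = id"
  by (simp add: fun_eq_iff refl_refl)

lemma bij_refl: "a \<noteq> 0 \<Longrightarrow> bij (refl a)"
  using o_bij refl_comp_refl by blast

lemma inv_refl: "a \<noteq> 0 \<Longrightarrow> inv (refl a) = refl a"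
  using inv_unique_comp refl_comp_refl by blast

lemma inner_refl_refl:
  assumes "a \<noteq> 0" shows "refl a u \<bullet> refl a v = u \<bullet> v"
proof -
  define p q n where "p = u \<bullet> a" and "q = v \<bullet> a" and "n = a \<bullet> a"
  have "n \<noteq> 0" using assms by (simp add: n_def)
  have "refl a u \<bullet> refl a v = u \<bullet> v - (2*q/n) * p - (2*p/n) * q + (2*p/n) * (2*q/n) * n"
    unfolding refl_def p_def q_def n_def
    by (simp add: inner_diff_left inner_diff_right inner_commute algebra_simps)
  also have "\<dots> = u \<bullet> v" using \<open>n \<noteq> 0\<close> by (simp add: field_simps)
  finally show ?thesis .
qed

lemma refl_orthogonal_transformation:
  assumes "linear f" "\<And>u v. f u \<bullet> f v = u \<bullet> v"
  shows "refl (f b) (f v) = f (refl b v)"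
  using assms unfolding refl_def by (simp add: linear_diff linear_scale)

lemma word_prod_Nil [simp]: "word_prod [] = id"
  by (simp add: word_prod_def)

lemma word_prod_Cons [simp]: "word_prod (a # l) = refl a \<circ> word_prod l"
  by (simp add: word_prod_def)

lemma word_prod_append: "word_prod (l1 @ l2) = word_prod l1 \<circ> word_prod l2"
  by (induction l1) auto

lemma linear_word_prod: "linear (word_prod l)"
proof (induction l)
  case (Cons a l)
  show ?case unfolding word_prod_Cons by (rule linear_compose[OF Cons linear_refl])
qed (simp only: word_prod_Nil linear_id)

lemma inv_word_prod:
  assumes "0 \<notin> set l" shows "inv (word_prod l) = word_prod (rev l)"
proof -
  have "word_prod (rev l) \<circ> word_prod l = id" if "0 \<notin> set l" for l :: "'a list"
    using that
  proof (induction l)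
    case (Cons a l)
    have "word_prod (rev (a # l)) \<circ> word_prod (a # l)
        = word_prod (rev l) \<circ> (refl a \<circ> refl a) \<circ> word_prod l"
      by (simp add: word_prod_append o_assoc)
    also have "\<dots> = id" using Cons by (simp add: refl_comp_refl fun_eq_iff)
    finally show ?case .
  qed simp
  from this[of l] this[of "rev l"] assms show ?thesis
    by (intro inv_unique_comp) simp_all
qed

lemma nonneg_comb_add:
  assumes "nonneg_comb S u" "nonneg_comb S v" shows "nonneg_comb S (u + v)"
proof -
  obtain f g where "\<forall>s\<in>S. 0 \<le> f s" "u = (\<Sum>s\<in>S. f s *\<^sub>R s)"
    and "\<forall>s\<in>S. 0 \<le> g s" "v = (\<Sum>s\<in>S. g s *\<^sub>R s)"
    using assms unfolding nonneg_comb_def by blast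
  then show ?thesis unfolding nonneg_comb_def
    by (intro exI[of _ "\<lambda>s. f s + g s"]) (simp add: scaleR_add_left sum.distrib)
qed

lemma nonneg_comb_base: assumes "finite S" "s \<in> S" shows "nonneg_comb S s"
proof -
  have "(\<Sum>t\<in>S. (if t = s then 1 else 0) *\<^sub>R t) = s"
    using assms by (simp add: if_distrib[of "\<lambda>r. r *\<^sub>R _"] sum.delta' cong: if_cong)
  then show ?thesis unfolding nonneg_comb_def
    by (intro exI[of _ "\<lambda>t. if t = s then 1 else 0"]) auto
qed

lemma inner_nonneg_comb_nonneg: "(\<forall>s\<in>S. 0 \<le> l \<bullet> s) \<Longrightarrow> nonneg_comb S v \<Longrightarrow> 0 \<le> l \<bullet> v"
  unfolding nonneg_comb_def by (auto simp: inner_sum_right intro!: sum_nonneg)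

lemma Ints_mult_less_4_imp_eq_1:
  fixes n m :: real
  assumes "n \<in> \<int>" "m \<in> \<int>" "0 < n" "0 < m" "n * m < 4"
  shows "n = 1 \<or> m = 1"
proof -
  obtain N M where N: "n = of_int N" and M: "m = of_int M"
    using assms(1,2) Ints_cases by metis
  have "N \<ge> 1" "M \<ge> 1" using assms(3,4) N M by simp_all
  have "real_of_int (N * M) < 4" using assms(5) N M by simp
  then have "N * M < 4" by linarith
  have "N = 1 \<or> M = 1"
  proof (rule ccontr)
    assume "\<not> (N = 1 \<or> M = 1)"
    then have "2 * 2 \<le> N * M" using \<open>N \<ge> 1\<close> \<open>M \<ge> 1\<close> by (intro mult_mono) auto
    then show False using \<open>N * M < 4\<close> by simp
  qed
  then show ?thesis using N M by auto
qed

definition bruhat_maximal ::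
    "'a::euclidean_space set \<Rightarrow> 'a \<Rightarrow> ('a \<Rightarrow> 'a) set \<Rightarrow> ('a \<Rightarrow> 'a) \<Rightarrow> bool" where
  "bruhat_maximal \<Phi> c S w \<longleftrightarrow> w \<in> S \<and> (\<forall>u\<in>S. bruhat_le \<Phi> c w u \<longrightarrow> u = w)"

lemma bruhat_le_length_less:
  "bruhat_le \<Phi> c w u \<Longrightarrow> u = w \<or> weyl_length \<Phi> c w < weyl_length \<Phi> c u"
  unfolding bruhat_le_def
  by (induction rule: rtranclp_induct) (auto simp: bruhat_step_def)

lemma exists_bruhat_maximal:
  assumes "finite S" "S \<noteq> {}" shows "\<exists>w. bruhat_maximal \<Phi> c S w"
proof -
  let ?len = "weyl_length \<Phi> c"
  have "Max (?len ` S) \<in> ?len ` S" using assms by (intro Max_in) auto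
  then obtain w where w: "w \<in> S" "?len w = Max (?len ` S)" by (auto elim!: imageE)
  have "?len u \<le> ?len w" if "u \<in> S" for u
    using w(2) assms(1) that by simp
  then have "bruhat_maximal \<Phi> c S w"
    using w(1) bruhat_le_length_less unfolding bruhat_maximal_def by fastforce
  then show ?thesis by blast
qed

locale positive_system =
  fixes \<Phi> :: "'a::euclidean_space set" and c :: 'a
  assumes root_system: "root_system \<Phi>" and regular: "regular_vec \<Phi> c"
begin

abbreviation "W \<equiv> weyl_group \<Phi>"
abbreviation "Pos \<equiv> pos_roots \<Phi> c"
abbreviation "\<Delta> \<equiv> simple_roots \<Phi> c"
abbreviation "len \<equiv> weyl_length \<Phi> c"

definition dominant :: "'a \<Rightarrow> bool" where
  "dominant v \<longleftrightarrow> (\<forall>s\<in>\<Delta>. 0 \<le> v \<bullet> s)"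

lemma finite_roots: "finite \<Phi>"
  using root_system by (simp add: root_system_def)

lemma root_nonzero: "a \<in> \<Phi> \<Longrightarrow> a \<noteq> 0"
  using root_system by (auto simp: root_system_def)

lemma refl_root: "a \<in> \<Phi> \<Longrightarrow> b \<in> \<Phi> \<Longrightarrow> refl a b \<in> \<Phi>"
  using root_system by (auto simp: root_system_def)

lemma cartan_Ints: "a \<in> \<Phi> \<Longrightarrow> b \<in> \<Phi> \<Longrightarrow> 2 * (b \<bullet> a) / (a \<bullet> a) \<in> \<int>"
  using root_system by (simp add: root_system_def)

lemma root_multiple: "a \<in> \<Phi> \<Longrightarrow> t *\<^sub>R a \<in> \<Phi> \<Longrightarrow> t = 1 \<or> t = -1"
  using root_system by (simp add: root_system_def)

lemma span_roots: "span \<Phi> = UNIV"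
  using root_system by (simp add: root_system_def)

lemma uminus_root: "a \<in> \<Phi> \<Longrightarrow> - a \<in> \<Phi>"
  using refl_root[of a a] refl_self[OF root_nonzero] by auto

lemma root_pos_or_neg: "a \<in> \<Phi> \<Longrightarrow> 0 < c \<bullet> a \<or> c \<bullet> a < 0"
  using regular by (force simp: regular_vec_def)

lemma pos_roots_iff: "a \<in> Pos \<longleftrightarrow> a \<in> \<Phi> \<and> 0 < c \<bullet> a"
  by (simp add: pos_roots_def)

lemma uminus_neg_root: "a \<in> \<Phi> \<Longrightarrow> c \<bullet> a < 0 \<Longrightarrow> - a \<in> Pos"
  by (simp add: pos_roots_iff uminus_root)

lemma not_pos_root: "a \<in> \<Phi> \<Longrightarrow> a \<notin> Pos \<longleftrightarrow> c \<bullet> a < 0"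
  using root_pos_or_neg pos_roots_iff by fastforce

lemma simple_pos_root: "a \<in> \<Delta> \<Longrightarrow> a \<in> Pos"
  by (simp add: simple_roots_def)

lemma simple_root: "a \<in> \<Delta> \<Longrightarrow> a \<in> \<Phi>"
  using simple_pos_root pos_roots_iff by blast

lemma simple_inner_pos: "a \<in> \<Delta> \<Longrightarrow> 0 < c \<bullet> a"
  using simple_pos_root pos_roots_iff by blast

lemma finite_simple_roots: "finite \<Delta>"
  by (rule finite_subset[OF _ finite_roots]) (use simple_root in blast)

lemma simple_not_sum: "a \<in> \<Delta> \<Longrightarrow> b \<in> Pos \<Longrightarrow> g \<in> Pos \<Longrightarrow> a \<noteq> b + g"
  by (auto simp: simple_roots_def)

lemma not_simple_sum: "a \<in> Pos \<Longrightarrow> a \<notin> \<Delta> \<Longrightarrow> \<exists>b\<in>Pos. \<exists>g\<in>Pos. a = b + g"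
  by (auto simp: simple_roots_def)

section \<open>The Weyl group\<close>

lemma refl_weyl: "a \<in> \<Phi> \<Longrightarrow> refl a \<in> W"
  using weyl_step[OF weyl_id, of a] by simp

lemma weyl_comp: "w \<in> W \<Longrightarrow> v \<in> W \<Longrightarrow> w \<circ> v \<in> W"
  by (induction rule: weyl_group.induct) (auto simp: comp_assoc intro: weyl_step)

lemma word_prod_weyl: "set l \<subseteq> \<Phi> \<Longrightarrow> word_prod l \<in> W"
  by (induction l) (auto intro: weyl_group.intros)

lemma linear_weyl: "w \<in> W \<Longrightarrow> linear w"
proof (induction rule: weyl_group.induct)
  case (weyl_step w a)
  then show ?case using linear_compose linear_refl by blast
qed (rule linear_id)

lemma inner_weyl: "w \<in> W \<Longrightarrow> w u \<bullet> w v = u \<bullet> v"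
  by (induction arbitrary: u v rule: weyl_group.induct) (auto simp: inner_refl_refl root_nonzero)

lemma weyl_root: "w \<in> W \<Longrightarrow> b \<in> \<Phi> \<Longrightarrow> w b \<in> \<Phi>"
  by (induction rule: weyl_group.induct) (auto simp: refl_root)

lemma weyl_uminus: "w \<in> W \<Longrightarrow> w (- x) = - w x"
  using linear_neg linear_weyl by blast

lemma bij_weyl: "w \<in> W \<Longrightarrow> bij w"
proof (induction rule: weyl_group.induct)
  case (weyl_step w a)
  then show ?case using bij_comp bij_refl root_nonzero by blast
qed (rule bij_id)

lemma weyl_inv_apply [simp]: "w \<in> W \<Longrightarrow> w (inv w x) = x"
  using bij_weyl bij_is_surj surj_f_inv_f by metis

lemma weyl_apply_inv [simp]: "w \<in> W \<Longrightarrow> inv w (w x) = x"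
  using bij_weyl bij_is_inj inv_f_f by metis

lemma weyl_inv_eq_iff: "w \<in> W \<Longrightarrow> inv w t = a \<longleftrightarrow> w a = t"
  by auto

lemma inv_weyl: "w \<in> W \<Longrightarrow> inv w \<in> W"
proof (induction rule: weyl_group.induct)
  case (weyl_step w a)
  then have "inv (refl a \<circ> w) = inv w \<circ> refl a"
    by (simp add: o_inv_distrib bij_refl bij_weyl inv_refl root_nonzero)
  then show ?case using weyl_step weyl_comp refl_weyl by metis
qed (simp only: inv_id weyl_id)

lemma refl_weyl_conj: assumes "w \<in> W" shows "refl (w b) = w \<circ> refl b \<circ> inv w"
proof
  fix x
  have "refl (w b) (w (inv w x)) = w (refl b (inv w x))"
    using refl_orthogonal_transformation linear_weyl inner_weyl assms by blast
  then show "refl (w b) x = (w \<circ> refl b \<circ> inv w) x" using assms by simp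
qed

lemma finite_weyl: "finite W"
proof -
  have "inj_on (\<lambda>w. restrict w \<Phi>) W"
  proof (rule inj_onI)
    fix v w assume vw: "v \<in> W" "w \<in> W" "restrict v \<Phi> = restrict w \<Phi>"
    have on_roots: "v b = w b" if "b \<in> \<Phi>" for b
      using vw(3) that by (metis restrict_apply')
    show "v = w"
    proof
      fix x
      show "v x = w x"
        using linear_eq_on_span[OF linear_weyl[OF vw(1)] linear_weyl[OF vw(2)] on_roots]
        by (simp add: span_roots)
    qed
  qed
  moreover have "(\<lambda>w. restrict w \<Phi>) ` W \<subseteq> (\<Pi>\<^sub>E i\<in>\<Phi>. \<Phi>)"
    using weyl_root by auto
  then have "finite ((\<lambda>w. restrict w \<Phi>) ` W)"
    by (rule finite_subset) (simp add: finite_PiE finite_roots)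
  ultimately show ?thesis using finite_imageD by blast
qed

section \<open>Positive and simple roots\<close>

lemma pos_root_induct [consumes 1, case_names less]:
  assumes "a \<in> Pos"
    and step: "\<And>a. a \<in> Pos \<Longrightarrow> (\<And>b. b \<in> Pos \<Longrightarrow> c \<bullet> b < c \<bullet> a \<Longrightarrow> P b) \<Longrightarrow> P a"
  shows "P a"
  using assms(1)
proof (induction "card {b\<in>Pos. c \<bullet> b < c \<bullet> a}" arbitrary: a rule: less_induct)
  case (less a)
  show ?case
  proof (rule step[OF less.prems])
    fix b assume b: "b \<in> Pos" "c \<bullet> b < c \<bullet> a"
    have "finite Pos" using finite_roots by (simp add: pos_roots_def)
    moreover have "{x\<in>Pos. c \<bullet> x < c \<bullet> b} \<subset> {x\<in>Pos. c \<bullet> x < c \<bullet> a}"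
      using b by auto
    ultimately have "card {x\<in>Pos. c \<bullet> x < c \<bullet> b} < card {x\<in>Pos. c \<bullet> x < c \<bullet> a}"
      by (intro psubset_card_mono) auto
    then show "P b" using less.hyps b(1) by blast
  qed
qed

lemma pos_root_nonneg_comb: "a \<in> Pos \<Longrightarrow> nonneg_comb \<Delta> a"
proof (induction rule: pos_root_induct)
  case (less a)
  show ?case
  proof (cases "a \<in> \<Delta>")
    case True then show ?thesis using nonneg_comb_base finite_simple_roots by blast
  next
    case False
    then obtain b g where "b \<in> Pos" "g \<in> Pos" "a = b + g" using not_simple_sum less.hyps by blast
    moreover have "c \<bullet> b < c \<bullet> a" "c \<bullet> g < c \<bullet> a"
      using calculation by (auto simp: pos_roots_iff inner_add_right)
    ultimately show ?thesis using less.IH nonneg_comb_add by metis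
  qed
qed

lemma dominant_inner_pos_root: "dominant v \<Longrightarrow> a \<in> Pos \<Longrightarrow> 0 \<le> v \<bullet> a"
  unfolding dominant_def using inner_nonneg_comb_nonneg pos_root_nonneg_comb by blast

lemma root_inner_sq_less:
  assumes a: "a \<in> \<Phi>" and b: "b \<in> \<Phi>" and "a \<noteq> b" and pos: "0 < a \<bullet> b"
  shows "(a \<bullet> b)\<^sup>2 < (a \<bullet> a) * (b \<bullet> b)"
proof -
  have "a \<bullet> b \<noteq> norm a * norm b"
  proof
    assume "a \<bullet> b = norm a * norm b"
    then have "norm a *\<^sub>R b = norm b *\<^sub>R a" using norm_cauchy_schwarz_eq by blast
    define t where "t = norm b / norm a"
    have "b = inverse (norm a) *\<^sub>R (norm a *\<^sub>R b)" using root_nonzero[OF a] by simp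
    also have "\<dots> = t *\<^sub>R a"
      using \<open>norm a *\<^sub>R b = norm b *\<^sub>R a\<close> by (simp add: t_def divide_inverse mult.commute)
    finally have b_eq: "b = t *\<^sub>R a" .
    then have "t = 1 \<or> t = -1" using root_multiple[OF a] b by simp
    moreover have "0 < t" using root_nonzero a b by (simp add: t_def)
    ultimately have "b = a" using b_eq by auto
    then show False using \<open>a \<noteq> b\<close> by simp
  qed
  then have "a \<bullet> b < norm a * norm b" using norm_cauchy_schwarz[of a b] by linarith
  then have "(a \<bullet> b)\<^sup>2 < (norm a * norm b)\<^sup>2" using pos by (intro power_strict_mono) auto
  then show ?thesis by (simp add: power_mult_distrib power2_norm_eq_inner)
qed

lemma cartan_eq_1:
  assumes a: "a \<in> \<Phi>" and b: "b \<in> \<Phi>" and "a \<noteq> b" and pos: "0 < a \<bullet> b"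
  shows "2 * (a \<bullet> b) / (b \<bullet> b) = 1 \<or> 2 * (b \<bullet> a) / (a \<bullet> a) = 1"
proof -
  have aa: "0 < a \<bullet> a" and bb: "0 < b \<bullet> b" using root_nonzero a b by auto
  have "(2 * (a \<bullet> b) / (b \<bullet> b)) * (2 * (b \<bullet> a) / (a \<bullet> a)) = 4 * (a \<bullet> b)\<^sup>2 / ((a \<bullet> a) * (b \<bullet> b))"
    by (simp add: inner_commute power2_eq_square)
  also have "\<dots> < 4"
    using root_inner_sq_less[OF assms] mult_pos_pos[OF aa bb] by (simp add: divide_less_eq)
  finally show ?thesis
    by (intro Ints_mult_less_4_imp_eq_1 cartan_Ints[OF b a] cartan_Ints[OF a b])
      (use pos aa bb in \<open>simp_all add: inner_commute\<close>)
qed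

lemma root_diff:
  assumes a: "a \<in> \<Phi>" and b: "b \<in> \<Phi>" and "a \<noteq> b" and pos: "0 < a \<bullet> b"
  shows "a - b \<in> \<Phi>"
  using cartan_eq_1[OF assms]
proof
  assume "2 * (a \<bullet> b) / (b \<bullet> b) = 1"
  then have "refl b a = a - b" using pos by (simp add: refl_def)
  then show ?thesis using refl_root[OF b a] by simp
next
  assume "2 * (b \<bullet> a) / (a \<bullet> a) = 1"
  then have "refl a b = - (a - b)" using pos by (simp add: refl_def inner_commute)
  then show ?thesis using uminus_root[OF refl_root[OF a b]] by simp
qed

lemma simple_roots_obtuse:
  assumes "a \<in> \<Delta>" "b \<in> \<Delta>" "a \<noteq> b" shows "a \<bullet> b \<le> 0"
proof (rule ccontr)
  assume "\<not> a \<bullet> b \<le> 0"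
  then have d: "a - b \<in> \<Phi>" using root_diff simple_root assms by simp
  have "a - b \<in> Pos \<or> - (a - b) \<in> Pos"
    using root_pos_or_neg[OF d] uminus_neg_root[OF d] d by (auto simp: pos_roots_iff)
  then show False
  proof
    assume "a - b \<in> Pos"
    then show False using simple_not_sum[OF assms(1) _ simple_pos_root[OF assms(2)]] by force
  next
    assume "- (a - b) \<in> Pos"
    then show False using simple_not_sum[OF assms(2) _ simple_pos_root[OF assms(1)]] by force
  qed
qed

(* Phrased with arbitrary nonnegative coefficients, so that the proof does not need the
   linear independence of the simple roots. *)
lemma nonneg_comb_simple_multiple:
  assumes a: "a \<in> \<Delta>" and h: "\<forall>s\<in>\<Delta>. 0 \<le> h s" and sum: "(\<Sum>s\<in>\<Delta>. h s *\<^sub>R s) = k *\<^sub>R a"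
  shows "\<forall>s\<in>\<Delta> - {a}. h s = 0"
proof -
  define u where "u = (\<Sum>s\<in>\<Delta> - {a}. h s *\<^sub>R s)"
  have u: "u = (k - h a) *\<^sub>R a"
    using sum sum.remove[OF finite_simple_roots a, of "\<lambda>s. h s *\<^sub>R s"]
    by (simp add: u_def algebra_simps)
  have "u \<bullet> a = (\<Sum>s\<in>\<Delta> - {a}. h s * (s \<bullet> a))"
    by (simp add: u_def inner_sum_left)
  also have "\<dots> \<le> 0"
    using h simple_roots_obtuse a by (intro sum_nonpos) (simp add: mult_nonneg_nonpos)
  finally have "(k - h a) * (a \<bullet> a) \<le> 0" using u by simp
  moreover have "0 < a \<bullet> a" using root_nonzero[OF simple_root[OF a]] by simp
  ultimately have "k - h a \<le> 0" by (simp add: mult_le_0_iff)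
  then have "c \<bullet> u \<le> 0"
    using u simple_inner_pos[OF a] by (simp add: mult_nonpos_nonneg)
  have terms: "\<forall>s\<in>\<Delta> - {a}. 0 \<le> h s * (c \<bullet> s)"
    using h simple_inner_pos by (simp add: less_imp_le)
  have "c \<bullet> u = (\<Sum>s\<in>\<Delta> - {a}. h s * (c \<bullet> s))"
    by (simp add: u_def inner_sum_right)
  moreover have "0 \<le> (\<Sum>s\<in>\<Delta> - {a}. h s * (c \<bullet> s))"
    using terms by (intro sum_nonneg) auto
  ultimately have "(\<Sum>s\<in>\<Delta> - {a}. h s * (c \<bullet> s)) = 0" using \<open>c \<bullet> u \<le> 0\<close> by linarith
  then have "\<forall>s\<in>\<Delta> - {a}. h s * (c \<bullet> s) = 0"
    by (subst (asm) sum_nonneg_eq_0_iff) (use terms finite_simple_roots in auto)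
  then show ?thesis using simple_inner_pos by (metis DiffD1 less_irrefl mult_eq_0_iff)
qed

lemma refl_simple_pos_root:
  assumes a: "a \<in> \<Delta>" and d: "\<delta> \<in> Pos" and "\<delta> \<noteq> a"
  shows "refl a \<delta> \<in> Pos"
proof (rule ccontr)
  have aR: "a \<in> \<Phi>" and dR: "\<delta> \<in> \<Phi>" using a d simple_root pos_roots_iff by auto
  assume "refl a \<delta> \<notin> Pos"
  then have "- refl a \<delta> \<in> Pos"
    using uminus_neg_root[OF refl_root[OF aR dR]] not_pos_root[OF refl_root[OF aR dR]] by blast
  then obtain g where g: "\<forall>s\<in>\<Delta>. 0 \<le> g s" "- refl a \<delta> = (\<Sum>s\<in>\<Delta>. g s *\<^sub>R s)"
    using pos_root_nonneg_comb unfolding nonneg_comb_def by blast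
  obtain f where f: "\<forall>s\<in>\<Delta>. 0 \<le> f s" "\<delta> = (\<Sum>s\<in>\<Delta>. f s *\<^sub>R s)"
    using pos_root_nonneg_comb[OF d] unfolding nonneg_comb_def by blast
  have "(\<Sum>s\<in>\<Delta>. (f s + g s) *\<^sub>R s) = \<delta> + - refl a \<delta>"
    by (simp only: scaleR_add_left sum.distrib flip: f(2) g(2))
  also have "\<dots> = (2 * (\<delta> \<bullet> a) / (a \<bullet> a)) *\<^sub>R a"
    by (simp add: refl_def)
  finally have sum: "(\<Sum>s\<in>\<Delta>. (f s + g s) *\<^sub>R s) = (2 * (\<delta> \<bullet> a) / (a \<bullet> a)) *\<^sub>R a" .
  have "\<forall>s\<in>\<Delta>. 0 \<le> f s + g s" using f(1) g(1) by simp
  from nonneg_comb_simple_multiple[OF a this sum]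
  have "\<forall>s\<in>\<Delta> - {a}. f s + g s = 0" .
  then have "\<forall>s\<in>\<Delta> - {a}. f s = 0" using f(1) g(1) by (metis DiffD1 add_nonneg_eq_0_iff)
  then have "\<delta> = f a *\<^sub>R a"
    using f(2) sum.remove[OF finite_simple_roots a, of "\<lambda>s. f s *\<^sub>R s"] by simp
  then have "f a = 1 \<or> f a = -1" using root_multiple[OF aR] dR by simp
  moreover have "0 < f a"
    using d \<open>\<delta> = f a *\<^sub>R a\<close> simple_inner_pos[OF a]
    by (simp add: pos_roots_iff zero_less_mult_iff)
  ultimately show False using \<open>\<delta> = f a *\<^sub>R a\<close> \<open>\<delta> \<noteq> a\<close> by auto
qed

lemma pos_root_inner_simple: assumes "a \<in> Pos" shows "\<exists>s\<in>\<Delta>. 0 < a \<bullet> s"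
proof (rule ccontr)
  assume "\<not> (\<exists>s\<in>\<Delta>. 0 < a \<bullet> s)"
  then have "\<forall>s\<in>\<Delta>. 0 \<le> (- a) \<bullet> s" by (auto simp: not_less)
  then have "0 \<le> (- a) \<bullet> a"
    using inner_nonneg_comb_nonneg pos_root_nonneg_comb[OF assms] by blast
  moreover have "a \<noteq> 0" using assms root_nonzero pos_roots_iff by blast
  then have "0 < a \<bullet> a" by simp
  ultimately show False by simp
qed

(* Descent: reflecting in a simple root s with a \<bullet> s > 0 lowers the height c \<bullet> a. *)
lemma pos_root_simple_conj:
  "a \<in> Pos \<Longrightarrow> \<exists>xs b. set xs \<subseteq> \<Delta> \<and> b \<in> \<Delta> \<and> a = word_prod xs b"
proof (induction rule: pos_root_induct)
  case (less a)
  show ?case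
  proof (cases "a \<in> \<Delta>")
    case True then show ?thesis by (intro exI[of _ "[]"] exI[of _ a]) simp
  next
    case False
    obtain s where s: "s \<in> \<Delta>" "0 < a \<bullet> s" using pos_root_inner_simple less.hyps by blast
    have "refl s a \<in> Pos" using refl_simple_pos_root s(1) less.hyps False by blast
    moreover have "c \<bullet> refl s a < c \<bullet> a"
      using s simple_inner_pos root_nonzero[OF simple_root[OF s(1)]]
      by (simp add: inner_refl_right)
    ultimately obtain xs b where "set xs \<subseteq> \<Delta>" "b \<in> \<Delta>" "refl s a = word_prod xs b"
      using less.IH by blast
    moreover have "a = refl s (refl s a)"
      by (simp add: refl_refl root_nonzero simple_root s(1))
    ultimately show ?thesis using s(1) by (intro exI[of _ "s # xs"] exI[of _ b]) simp
  qed
qed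

lemma root_simple_conj:
  assumes "a \<in> \<Phi>" shows "\<exists>xs b. set xs \<subseteq> \<Delta> \<and> b \<in> \<Delta> \<and> a = word_prod xs b"
proof (cases "a \<in> Pos")
  case True then show ?thesis using pos_root_simple_conj by blast
next
  case False
  then obtain xs b where xs: "set xs \<subseteq> \<Delta>" "b \<in> \<Delta>" "- a = word_prod xs b"
    using pos_root_simple_conj[OF uminus_neg_root[OF assms]] not_pos_root[OF assms] by blast
  have "a = - word_prod xs b" by (simp add: xs(3)[symmetric])
  also have "\<dots> = word_prod xs (refl b b)"
    using refl_self[OF root_nonzero[OF simple_root[OF xs(2)]]]
    by (simp add: linear_neg[OF linear_word_prod])
  finally have "a = word_prod xs (refl b b)" .
  then show ?thesis using xs by (intro exI[of _ "xs @ [b]"] exI[of _ b]) (simp add: word_prod_append)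
qed

lemma weyl_simple_word: "w \<in> W \<Longrightarrow> \<exists>l. set l \<subseteq> \<Delta> \<and> w = word_prod l"
proof (induction rule: weyl_group.induct)
  case weyl_id then show ?case by (intro exI[of _ "[]"]) simp
next
  case (weyl_step w a)
  then obtain l where l: "set l \<subseteq> \<Delta>" "w = word_prod l" by blast
  obtain xs b where xs: "set xs \<subseteq> \<Delta>" "b \<in> \<Delta>" "a = word_prod xs b"
    using root_simple_conj weyl_step by blast
  have "word_prod xs \<in> W" using xs(1) simple_root word_prod_weyl by blast
  then have "refl a = word_prod xs \<circ> refl b \<circ> inv (word_prod xs)"
    by (simp add: xs(3) refl_weyl_conj)
  moreover have "0 \<notin> set xs" using xs(1) simple_root root_nonzero by blast
  ultimately have "refl a = word_prod (xs @ [b] @ rev xs)"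
    by (simp add: inv_word_prod word_prod_append comp_assoc)
  then show ?case using l xs by (intro exI[of _ "(xs @ [b] @ rev xs) @ l"]) (auto simp: word_prod_append)
qed

lemma refl_coxeter_reflection:
  assumes "a \<in> \<Phi>" shows "refl a \<in> coxeter_reflections \<Phi> c"
proof -
  obtain xs b where xs: "set xs \<subseteq> \<Delta>" "b \<in> \<Delta>" "a = word_prod xs b"
    using root_simple_conj assms by blast
  have "word_prod xs \<in> W" using xs(1) word_prod_weyl simple_root by blast
  moreover have "refl a = word_prod xs \<circ> refl b \<circ> inv (word_prod xs)"
    using refl_weyl_conj calculation xs(3) by blast
  ultimately show ?thesis
    unfolding coxeter_reflections_def using xs(2) by blast
qed

section \<open>Length\<close>

lemma reduced_word:
  assumes "w \<in> W" shows "\<exists>l. set l \<subseteq> \<Delta> \<and> length l = len w \<and> w = word_prod l"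
proof -
  have "\<exists>n l. length l = n \<and> set l \<subseteq> \<Delta> \<and> w = word_prod l"
    using weyl_simple_word[OF assms] by blast
  then have "\<exists>l. length l = len w \<and> set l \<subseteq> \<Delta> \<and> w = word_prod l"
    unfolding weyl_length_def by (rule LeastI_ex)
  then show ?thesis by blast
qed

lemma weyl_length_le: "set l \<subseteq> \<Delta> \<Longrightarrow> len (word_prod l) \<le> length l"
  unfolding weyl_length_def by (rule Least_le) blast

(* The deletion property of the Coxeter system (W, simple reflections). *)
lemma word_prod_refl_delete:
  "set l \<subseteq> \<Delta> \<Longrightarrow> \<beta> \<in> Pos \<Longrightarrow> c \<bullet> word_prod l \<beta> < 0 \<Longrightarrow>
   \<exists>i<length l. word_prod l \<circ> refl \<beta> = word_prod (take i l @ drop (Suc i) l)"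
proof (induction l)
  case Nil then show ?case using pos_roots_iff by simp
next
  case (Cons x l)
  let ?y = "word_prod l"
  have yW: "?y \<in> W" using Cons.prems(1) simple_root word_prod_weyl by auto
  have \<beta>: "\<beta> \<in> \<Phi>" using Cons.prems(2) pos_roots_iff by blast
  show ?case
  proof (cases "c \<bullet> ?y \<beta> < 0")
    case True
    have "set l \<subseteq> \<Delta>" using Cons.prems(1) by simp
    then obtain i where i: "i < length l" "?y \<circ> refl \<beta> = word_prod (take i l @ drop (Suc i) l)"
      using Cons.IH Cons.prems(2) True by blast
    have "word_prod (x # l) \<circ> refl \<beta>
        = word_prod (take (Suc i) (x # l) @ drop (Suc (Suc i)) (x # l))"
      unfolding word_prod_Cons comp_assoc i(2) by simp
    moreover have "Suc i < length (x # l)" using i(1) by simp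
    ultimately show ?thesis by blast
  next
    case False
    then have "?y \<beta> \<in> Pos" using not_pos_root weyl_root[OF yW \<beta>] by blast
    moreover have "refl x (?y \<beta>) \<notin> Pos" using Cons.prems(3) pos_roots_iff by simp
    ultimately have "?y \<beta> = x" using refl_simple_pos_root Cons.prems(1) by auto
    then have "word_prod (x # l) \<circ> refl \<beta> = (?y \<circ> refl \<beta> \<circ> inv ?y) \<circ> ?y \<circ> refl \<beta>"
      using refl_weyl_conj[OF yW, of \<beta>] by (simp add: comp_assoc)
    also have "\<dots> = ?y" using yW refl_refl[OF root_nonzero[OF \<beta>]] by (simp add: fun_eq_iff)
    finally have "word_prod (x # l) \<circ> refl \<beta> = ?y" .
    then show ?thesis
      by (intro exI[of _ 0] conjI)
        (simp_all only: take_0 drop_Suc_Cons drop_0 append_Nil length_Cons zero_less_Suc)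
  qed
qed

lemma weyl_length_refl_less:
  assumes w: "w \<in> W" and "\<beta> \<in> Pos" "c \<bullet> w \<beta> < 0"
  shows "len (w \<circ> refl \<beta>) < len w"
proof -
  obtain l where l: "set l \<subseteq> \<Delta>" "length l = len w" "w = word_prod l"
    using reduced_word[OF w] by blast
  obtain i where i: "i < length l" "w \<circ> refl \<beta> = word_prod (take i l @ drop (Suc i) l)"
    using word_prod_refl_delete[OF l(1) assms(2)] assms(3) l(3) by blast
  have "set (take i l @ drop (Suc i) l) \<subseteq> \<Delta>"
    using l(1) by (auto dest: in_set_takeD in_set_dropD)
  then have "len (w \<circ> refl \<beta>) \<le> length (take i l @ drop (Suc i) l)"
    unfolding i(2) by (rule weyl_length_le)
  then show ?thesis using i(1) l(2) by simp
qed

lemma weyl_simple_pos_eq_id: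
  assumes w: "w \<in> W" and pos: "\<forall>a\<in>\<Delta>. 0 < c \<bullet> w a"
  shows "w = id"
proof (rule ccontr)
  assume "w \<noteq> id"
  obtain l where l: "set l \<subseteq> \<Delta>" "length l = len w" "w = word_prod l"
    using reduced_word[OF w] by blast
  then have "l \<noteq> []" using \<open>w \<noteq> id\<close> by auto
  then obtain ys a where ya: "l = ys @ [a]" by (metis rev_exhaust)
  have a: "a \<in> \<Delta>" and ys: "set ys \<subseteq> \<Delta>" using l(1) ya by auto
  have w_eq: "w = word_prod ys \<circ> refl a" using l(3) ya by (simp add: word_prod_append)
  then have "w a = - word_prod ys a"
    using refl_self[OF root_nonzero[OF simple_root[OF a]]] linear_neg[OF linear_word_prod] by simp
  moreover have "0 < c \<bullet> w a" using pos a by blast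
  ultimately have "c \<bullet> word_prod ys a < 0" by simp
  moreover have "word_prod ys \<in> W" using ys simple_root word_prod_weyl by blast
  ultimately have "len w < len (word_prod ys)"
    unfolding w_eq using weyl_length_refl_less simple_pos_root[OF a] by blast
  then show False using weyl_length_le[OF ys] l(2) ya by simp
qed

lemma bruhat_le_refl:
  assumes "w \<in> W" "\<beta> \<in> \<Phi>" "len w < len (w \<circ> refl \<beta>)"
  shows "bruhat_le \<Phi> c w (w \<circ> refl \<beta>)"
  unfolding bruhat_le_def
  by (rule r_into_rtranclp) (use assms refl_coxeter_reflection in \<open>auto simp: bruhat_step_def\<close>)

section \<open>Dominant roots\<close>

lemma exists_weyl_dominant: "\<exists>x\<in>W. dominant (x v)"
proof -
  let ?F = "(\<lambda>x. c \<bullet> x v) ` W"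
  have F: "finite ?F" using finite_weyl by simp
  have "Max ?F \<in> ?F" using F weyl_id by (intro Max_in) auto
  then obtain x where x: "x \<in> W" "c \<bullet> x v = Max ?F" by (auto elim!: imageE)
  have "0 \<le> x v \<bullet> s" if s: "s \<in> \<Delta>" for s
  proof (rule ccontr)
    assume "\<not> 0 \<le> x v \<bullet> s"
    moreover have "0 < s \<bullet> s" "0 < c \<bullet> s"
      using s root_nonzero simple_root simple_inner_pos by auto
    ultimately have "c \<bullet> x v < c \<bullet> (refl s \<circ> x) v"
      by (simp add: inner_refl_right divide_neg_pos mult_neg_pos)
    moreover have "refl s \<circ> x \<in> W" using weyl_comp refl_weyl simple_root s x(1) by blast
    then have "c \<bullet> (refl s \<circ> x) v \<le> Max ?F" by (rule Max_ge[OF F imageI])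
    ultimately show False using x(2) by simp
  qed
  then show ?thesis unfolding dominant_def using x(1) by blast
qed

lemma dominant_eq_of_nonneg_comb:
  assumes "dominant \<mu>" "dominant \<theta>" "nonneg_comb \<Delta> (\<theta> - \<mu>)" "\<mu> \<bullet> \<mu> = \<theta> \<bullet> \<theta>"
  shows "\<mu> = \<theta>"
proof -
  have "0 \<le> \<theta> \<bullet> (\<theta> - \<mu>)" "0 \<le> \<mu> \<bullet> (\<theta> - \<mu>)"
    using assms(1-3) inner_nonneg_comb_nonneg unfolding dominant_def by blast+
  then have "(\<theta> - \<mu>) \<bullet> (\<theta> - \<mu>) = 0"
    using assms(4) by (simp add: inner_diff_left inner_diff_right inner_commute)
  then show ?thesis by simp
qed

lemma highest_root_dominant:
  assumes "highest_root \<Phi> c \<theta>" shows "dominant \<theta>"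
  unfolding dominant_def
proof
  fix s assume s: "s \<in> \<Delta>"
  have \<theta>: "\<theta> \<in> \<Phi>" and "\<forall>\<beta>\<in>\<Phi>. nonneg_comb \<Delta> (\<theta> - \<beta>)"
    using assms unfolding highest_root_def by auto
  then have "nonneg_comb \<Delta> (\<theta> - refl s \<theta>)" using refl_root[OF simple_root[OF s] \<theta>] by blast
  moreover have "\<forall>t\<in>\<Delta>. 0 \<le> c \<bullet> t" using simple_inner_pos less_imp_le by blast
  ultimately have "0 \<le> c \<bullet> (\<theta> - refl s \<theta>)" using inner_nonneg_comb_nonneg by blast
  then have "0 \<le> (2 * (\<theta> \<bullet> s) / (s \<bullet> s)) * (c \<bullet> s)" by (simp add: inner_diff_right inner_refl_right)
  then have "0 \<le> 2 * (\<theta> \<bullet> s) / (s \<bullet> s)"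
    using simple_inner_pos[OF s] by (metis zero_le_mult_iff not_less)
  moreover have "0 < s \<bullet> s" using root_nonzero[OF simple_root[OF s]] by simp
  ultimately show "0 \<le> \<theta> \<bullet> s" by (simp add: zero_le_divide_iff)
qed

lemma highest_root_conj:
  assumes hr: "highest_root \<Phi> c \<theta>" and "\<alpha> \<in> \<Phi>" "\<alpha> \<bullet> \<alpha> = \<theta> \<bullet> \<theta>"
  shows "\<exists>x\<in>W. x \<alpha> = \<theta>"
proof -
  obtain x where x: "x \<in> W" "dominant (x \<alpha>)" using exists_weyl_dominant by blast
  have "nonneg_comb \<Delta> (\<theta> - x \<alpha>)"
    using hr weyl_root[OF x(1) assms(2)] unfolding highest_root_def by blast
  moreover have "x \<alpha> \<bullet> x \<alpha> = \<theta> \<bullet> \<theta>" using inner_weyl[OF x(1)] assms(3) by simp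
  ultimately have "x \<alpha> = \<theta>"
    using dominant_eq_of_nonneg_comb[OF x(2) highest_root_dominant[OF hr]] by blast
  then show ?thesis using x(1) by blast
qed

section \<open>Bruhat-maximal elements\<close>

lemma bruhat_maximal_inv_neg:
  assumes max: "bruhat_maximal \<Phi> c {w\<in>W. w \<alpha> = \<theta>} w"
    and \<gamma>: "\<gamma> \<in> Pos" "\<gamma> \<bullet> \<theta> = 0"
  shows "c \<bullet> inv w \<gamma> < 0"
proof (rule ccontr)
  have w: "w \<in> W" "w \<alpha> = \<theta>" using max unfolding bruhat_maximal_def by auto
  define \<beta> where "\<beta> = inv w \<gamma>"
  have \<beta>: "\<beta> \<in> \<Phi>" "w \<beta> = \<gamma>"
    using weyl_root[OF inv_weyl[OF w(1)]] \<gamma>(1) w(1) by (auto simp: \<beta>_def pos_roots_iff)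
  assume "\<not> c \<bullet> inv w \<gamma> < 0"
  then have "\<beta> \<in> Pos" using not_pos_root[OF \<beta>(1)] by (simp add: \<beta>_def)
  define u where "u = w \<circ> refl \<beta>"
  have "refl \<gamma> \<circ> w = w \<circ> refl \<beta> \<circ> inv w \<circ> w"
    using refl_weyl_conj[OF w(1), of \<beta>] \<beta>(2) by simp
  also have "\<dots> = u" using w(1) by (simp add: u_def fun_eq_iff)
  finally have "u \<alpha> = \<theta>" using w(2) refl_orthogonal[of \<theta> \<gamma>] \<gamma>(2) by (auto simp: inner_commute)
  have "u \<in> W" using w(1) refl_weyl[OF \<beta>(1)] by (simp add: u_def weyl_comp)
  have "u \<beta> = - \<gamma>"
    using \<beta> w(1) by (simp add: u_def refl_self root_nonzero weyl_uminus)
  then have "len (u \<circ> refl \<beta>) < len u"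
    using weyl_length_refl_less[OF \<open>u \<in> W\<close> \<open>\<beta> \<in> Pos\<close>] \<gamma>(1) by (simp add: pos_roots_iff)
  moreover have "u \<circ> refl \<beta> = w"
    using refl_comp_refl[OF root_nonzero[OF \<beta>(1)]] by (simp add: u_def comp_assoc)
  ultimately have "bruhat_le \<Phi> c w u"
    using bruhat_le_refl[OF w(1) \<beta>(1)] by (simp add: u_def)
  then have "u = w" using max \<open>u \<in> W\<close> \<open>u \<alpha> = \<theta>\<close> unfolding bruhat_maximal_def by blast
  then have "c \<bullet> \<gamma> = c \<bullet> (- \<gamma>)" using \<open>u \<beta> = - \<gamma>\<close> \<beta>(2) by simp
  then show False using \<gamma>(1) by (simp add: pos_roots_iff)
qed

lemma bruhat_maximal_pos_iff:
  assumes max: "bruhat_maximal \<Phi> c {w\<in>W. w \<alpha> = \<theta>} w"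
    and \<delta>: "\<delta> \<in> \<Phi>" "\<delta> \<bullet> \<alpha> = 0"
  shows "0 < c \<bullet> w \<delta> \<longleftrightarrow> c \<bullet> \<delta> < 0"
proof -
  have w: "w \<in> W" "w \<alpha> = \<theta>" using max unfolding bruhat_maximal_def by auto
  have w\<delta>: "w \<delta> \<in> \<Phi>" "w \<delta> \<bullet> \<theta> = 0"
    using weyl_root[OF w(1) \<delta>(1)] inner_weyl[OF w(1), of \<delta> \<alpha>] w(2) \<delta>(2) by auto
  show ?thesis
  proof
    assume "0 < c \<bullet> w \<delta>"
    then have "w \<delta> \<in> Pos" using w\<delta>(1) by (simp add: pos_roots_iff)
    then show "c \<bullet> \<delta> < 0"
      using bruhat_maximal_inv_neg[OF max _ w\<delta>(2)] w(1) by simp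
  next
    assume "c \<bullet> \<delta> < 0"
    show "0 < c \<bullet> w \<delta>"
    proof (rule ccontr)
      assume "\<not> 0 < c \<bullet> w \<delta>"
      then have "- w \<delta> \<in> Pos" using uminus_neg_root[OF w\<delta>(1)] not_pos_root[OF w\<delta>(1)]
        by (auto simp: pos_roots_iff)
      then have "c \<bullet> inv w (- w \<delta>) < 0"
        using bruhat_maximal_inv_neg[OF max] w\<delta>(2) by simp
      moreover have "inv w (- w \<delta>) = - \<delta>"
        using weyl_uminus[OF w(1), of \<delta>] w(1) by (metis weyl_apply_inv)
      ultimately show False using \<open>c \<bullet> \<delta> < 0\<close> by simp
    qed
  qed
qed

lemma weyl_stabilizer_eq_id:
  assumes y: "y \<in> W" "y \<theta> = \<theta>" and dom: "dominant \<theta>"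
    and orth: "\<And>a. a \<in> \<Delta> \<Longrightarrow> a \<bullet> \<theta> = 0 \<Longrightarrow> 0 < c \<bullet> y a"
  shows "y = id"
proof (rule weyl_simple_pos_eq_id[OF y(1)], rule ballI, rule ccontr)
  fix a assume a: "a \<in> \<Delta>" and "\<not> 0 < c \<bullet> y a"
  have ya: "y a \<in> \<Phi>" using weyl_root[OF y(1) simple_root[OF a]] .
  then have "- y a \<in> Pos"
    using \<open>\<not> 0 < c \<bullet> y a\<close> uminus_neg_root[OF ya] not_pos_root[OF ya] by (auto simp: pos_roots_iff)
  then have "\<theta> \<bullet> y a \<le> 0" using dominant_inner_pos_root[OF dom] by fastforce
  moreover have "\<theta> \<bullet> y a = \<theta> \<bullet> a" using inner_weyl[OF y(1), of \<theta> a] y(2) by simp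
  moreover have "0 \<le> \<theta> \<bullet> a" using dom a unfolding dominant_def by blast
  ultimately have "a \<bullet> \<theta> = 0" by (simp add: inner_commute)
  then show False using orth a \<open>\<not> 0 < c \<bullet> y a\<close> by blast
qed

lemma bruhat_maximal_unique:
  assumes "dominant \<theta>"
    and max1: "bruhat_maximal \<Phi> c {w\<in>W. w \<alpha> = \<theta>} w1"
    and max2: "bruhat_maximal \<Phi> c {w\<in>W. w \<alpha> = \<theta>} w2"
  shows "w1 = w2"
proof -
  have w1: "w1 \<in> W" "w1 \<alpha> = \<theta>" and w2: "w2 \<in> W" "w2 \<alpha> = \<theta>"
    using max1 max2 unfolding bruhat_maximal_def by auto
  have "w1 \<circ> inv w2 = id"
  proof (rule weyl_stabilizer_eq_id)
    show "w1 \<circ> inv w2 \<in> W" using weyl_comp[OF w1(1) inv_weyl[OF w2(1)]] .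
    have "inv w2 \<theta> = \<alpha>" using weyl_inv_eq_iff[OF w2(1)] w2(2) by blast
    then show "(w1 \<circ> inv w2) \<theta> = \<theta>" using w1(2) by simp
    fix a assume a: "a \<in> \<Delta>" "a \<bullet> \<theta> = 0"
    define \<delta> where "\<delta> = inv w2 a"
    have \<delta>: "\<delta> \<in> \<Phi>" "w2 \<delta> = a"
      using weyl_root[OF inv_weyl[OF w2(1)] simple_root[OF a(1)]] w2(1) by (auto simp: \<delta>_def)
    have "\<delta> \<bullet> \<alpha> = 0" using inner_weyl[OF w2(1), of \<delta> \<alpha>] \<delta>(2) w2(2) a(2) by simp
    then have "c \<bullet> \<delta> < 0"
      using bruhat_maximal_pos_iff[OF max2 \<delta>(1)] \<delta>(2) simple_inner_pos[OF a(1)] by simp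
    then show "0 < c \<bullet> (w1 \<circ> inv w2) a"
      using bruhat_maximal_pos_iff[OF max1 \<delta>(1) \<open>\<delta> \<bullet> \<alpha> = 0\<close>] by (simp add: \<delta>_def)
  qed fact
  show ?thesis
  proof
    fix v
    have "w1 v = (w1 \<circ> inv w2) (w2 v)" using w2(1) by simp
    also have "\<dots> = w2 v" unfolding \<open>w1 \<circ> inv w2 = id\<close> by simp
    finally show "w1 v = w2 v" .
  qed
qed

end

theorem mainTheorem13:
  fixes \<Phi> :: "'a::euclidean_space set" and c \<theta> \<alpha> :: 'a
  assumes "root_system \<Phi>" and "irreducible_rs \<Phi>"
    and "regular_vec \<Phi> c"
    and "highest_root \<Phi> c \<theta>"
    and "\<alpha> \<in> \<Phi>" and "\<alpha> \<bullet> \<alpha> = \<theta> \<bullet> \<theta>"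
  shows "\<exists>!w. w \<in> weyl_group \<Phi> \<and> inv w \<theta> = \<alpha> \<and>
            (\<forall>u. u \<in> weyl_group \<Phi> \<and> inv u \<theta> = \<alpha> \<and> bruhat_le \<Phi> c w u \<longrightarrow> u = w)"
proof -
  interpret positive_system \<Phi> c using assms(1,3) by unfold_locales
  define S where "S = {w \<in> W. w \<alpha> = \<theta>}"
  have max_iff: "bruhat_maximal \<Phi> c S w \<longleftrightarrow>
      w \<in> W \<and> inv w \<theta> = \<alpha> \<and> (\<forall>u. u \<in> W \<and> inv u \<theta> = \<alpha> \<and> bruhat_le \<Phi> c w u \<longrightarrow> u = w)" for w
    using weyl_inv_eq_iff unfolding S_def bruhat_maximal_def by blast
  have "finite S" "S \<noteq> {}"
    using finite_weyl highest_root_conj[OF assms(4-6)] by (auto simp: S_def)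
  then obtain w where "bruhat_maximal \<Phi> c S w" using exists_bruhat_maximal by blast
  moreover have "w' = w" if "bruhat_maximal \<Phi> c S w'" for w'
    using bruhat_maximal_unique highest_root_dominant[OF assms(4)] that calculation
    unfolding S_def by blast
  ultimately show ?thesis unfolding max_iff[symmetric] by (rule ex1I)
qed

end
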